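(* Let $\{(X_h^{(t)})_{h=1}^H\}_{t\in[T]}$ be i.i.d. copies of a possibly time-inhomogeneous Markov chain on a finite state space $\mathcal Z$ with initial distribution $\mu$ ($X_1^{(t)}\sim\mu$) and transition matrices $(P_h)_{h\ge1}$ ($X_{h+1}^{(t)}\sim P_h(X_h^{(t)},\cdot)$). Assume $\mu$ and all $P_h$ are $\eta$-regular for some $\eta\ge1$, and each $P_h$ admits a stationary distribution $\nu_h$. Let $\phi_h:\mathcal Z\to\mathbb R$, $h\in[H]$, be bounded functions. Then for all $\rho\ge0$, $$\mathbb P\Big[\sum_{t=1}^T\sum_{h=1}^H\big(\phi_h(X_h^{(t)})-\mathbb E_\mu[\phi_h(X_h^{(t)})]\big)>\rho\Big]\le\exp\Big(-\frac{\rho^2}{2TH\,V_{\mu,P,\phi}+\frac23M_{P,\phi}\rho}\Big),$$ where $V_{\mu,P,\phi}=(1+\sqrt2\,\eta(2\eta-1))^2\max_{z\in\mathcal Z}\max_{1\le\ell\le h\le H}\mathrm{Var}_{P_{\ell-1}(z,\cdot)}[\phi_h]$ and $M_{P,\phi}=(2\eta-1)\max_{h\in[H]}\|\phi_h\|_\infty$, with the convention $P_0(z,\cdot)=\mu$.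
   Context: A probability distribution $\nu$ on $\mathcal Z$ is $\eta$-regular if $\max_{z_1,z_2}\nu(z_1)/\nu(z_2)\le\eta$. A transition matrix $P$ on $\mathcal Z$ is $\eta$-regular if $\max_{x,y,z\in\mathcal Z}\max\{P(y|x)/P(z|x),\,P(x|y)/P(x|z)\}\le\eta$ (here $P(y|x)=P(x,y)$). $\mathrm{Var}_{\nu}[\phi]$ denotes the variance of $\phi(Z)$ for $Z\sim\nu$, and $\mathbb E_\mu[\phi_h(X_h^{(t)})]$ is the expectation when $X_1^{(t)}\sim\mu$. *)

theory Defs
  imports "HOL-Probability.Probability"
begin

definition regular_dist :: "real \<Rightarrow> 'z pmf \<Rightarrow> bool" where
  "regular_dist \<eta> \<nu> \<longleftrightarrow> (\<forall>z1 z2. pmf \<nu> z1 \<le> \<eta> * pmf \<nu> z2)"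

text \<open>A transition matrix (row x is the pmf P x, P(y|x) = pmf (P x) y) is eta-regular.\<close>
definition regular_kernel :: "real \<Rightarrow> ('z \<Rightarrow> 'z pmf) \<Rightarrow> bool" where
  "regular_kernel \<eta> P \<longleftrightarrow>
     (\<forall>x y z. pmf (P x) y \<le> \<eta> * pmf (P x) z \<and> pmf (P y) x \<le> \<eta> * pmf (P z) x)"

definition stationary :: "('z \<Rightarrow> 'z pmf) \<Rightarrow> 'z pmf \<Rightarrow> bool" where
  "stationary P \<nu> \<longleftrightarrow> bind_pmf \<nu> P = \<nu>"

definition step_kernel :: "'z pmf \<Rightarrow> (nat \<Rightarrow> 'z \<Rightarrow> 'z pmf) \<Rightarrow> nat \<Rightarrow> 'z \<Rightarrow> 'z pmf" where
  "step_kernel \<mu> P n x = (if n = 0 then \<mu> else P n x)"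

text \<open>Law of the path (X_1,...,X_n) of the time-inhomogeneous chain, as a function
  h \<mapsto> X_h (coordinates outside 1..n are undefined):
  X_1 ~ mu, X_(h+1) ~ P_h(X_h, .).\<close>
fun markov_path :: "'z pmf \<Rightarrow> (nat \<Rightarrow> 'z \<Rightarrow> 'z pmf) \<Rightarrow> nat \<Rightarrow> (nat \<Rightarrow> 'z) pmf" where
  "markov_path \<mu> P 0 = return_pmf (\<lambda>_. undefined)"
| "markov_path \<mu> P (Suc n) =
     bind_pmf (markov_path \<mu> P n) (\<lambda>x.
       map_pmf (\<lambda>z. x(Suc n := z)) (step_kernel \<mu> P n (x n)))"

definition iid_paths :: "'z pmf \<Rightarrow> (nat \<Rightarrow> 'z \<Rightarrow> 'z pmf) \<Rightarrow> nat \<Rightarrow> nat \<Rightarrow> (nat \<Rightarrow> nat \<Rightarrow> 'z) pmf" where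
  "iid_paths \<mu> P H T = Pi_pmf {1..T} (\<lambda>_. undefined) (\<lambda>_. markov_path \<mu> P H)"

definition V_const :: "real \<Rightarrow> 'z::finite pmf \<Rightarrow> (nat \<Rightarrow> 'z \<Rightarrow> 'z pmf) \<Rightarrow> (nat \<Rightarrow> 'z \<Rightarrow> real) \<Rightarrow> nat \<Rightarrow> real" where
  "V_const \<eta> \<mu> P \<phi> H = (1 + sqrt 2 * \<eta> * (2 * \<eta> - 1))\<^sup>2 *
     Max {measure_pmf.variance (step_kernel \<mu> P (l - 1) z) (\<phi> h) | z l h. 1 \<le> l \<and> l \<le> h \<and> h \<le> H}"

definition M_const :: "real \<Rightarrow> (nat \<Rightarrow> 'z::finite \<Rightarrow> real) \<Rightarrow> nat \<Rightarrow> real" where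
  "M_const \<eta> \<phi> H = (2 * \<eta> - 1) * Max {\<bar>\<phi> h z\<bar> | h z. h \<in> {1..H}}"

end

theory Submission
  imports Defs
begin

(* For one path the centred sum is the terminal value of the Doob martingale of
   sum_h phi_h(X_h): with the value function V_l(x) = E[sum_{h >= l} phi_h(X_h) | X_l = x],
   its increments are D_l = V_l(X_l) - E[V_l(X_l) | X_(l-1)].  Column regularity
   P_h(x|y) <= eta P_h(x|z) lets a kernel move a mean by at most (eta - 1) standard deviations
   and contracts oscillations by the factor 1 - 1/eta (Dobrushin).  Hence osc V_l <= 2 eta B and
   Var[D_l | X_(l-1)] <= (1 + eta (eta - 1) / 2)^2 m, where B bounds the |phi_h| and m their
   one-step variances.  Bennett's inequality for each increment bounds the moment generating
   function of a path, independence multiplies these bounds over the T paths, and a Chernoff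
   bound at Bennett's optimal exponent gives the tail.  The oscillation bound 2 eta B is only
   within 2 (2 eta - 1) B = 2 M, twice the M of the statement; this is paid for by the lower
   bound u^2 / (10 + u/3) on Bennett's function, whose factor 10 the constant V absorbs since
   5 (1 + eta (eta - 1) / 2)^2 <= (1 + sqrt 2 eta (2 eta - 1))^2. *)

section \<open>Elementary real inequalities\<close>

lemma exp_le_quadratic_of_nonpos:
  fixes x :: real
  assumes "x \<le> 0"
  shows "exp x \<le> 1 + x + x\<^sup>2 / 2"
proof -
  obtain t where t: "exp x = (\<Sum>m<3. x ^ m / fact m) + exp t / fact 3 * x ^ 3"
    using Maclaurin_exp_le[of x 3] by blast
  have "exp t / fact 3 * x ^ 3 \<le> 0"
    using assms by (intro mult_nonneg_nonpos) (auto simp: power_le_zero_eq)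
  moreover have "(\<Sum>m<3. x ^ m / fact m) = 1 + x + x\<^sup>2 / 2"
    by (simp add: numeral_3_eq_3 power2_eq_square)
  ultimately show ?thesis
    using t by linarith
qed

lemma exp_remainder_ratio_mono:
  fixes x a :: real
  assumes "0 < x" "x \<le> a"
  shows "(exp x - 1 - x) / x\<^sup>2 \<le> (exp a - 1 - a) / a\<^sup>2"
proof -
  have deriv_nonneg: "0 \<le> (s - 1) * exp s + 1" if "0 \<le> s" for s :: real
  proof -
    have "(\<lambda>r. (r - 1) * exp r + 1) 0 \<le> (\<lambda>r. (r - 1) * exp r + 1) s"
      by (rule deriv_nonneg_imp_mono[where g' = "\<lambda>r. r * exp r"])
        (use that in \<open>auto intro!: derivative_eq_intros simp: algebra_simps\<close>)
    then show ?thesis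
      by simp
  qed
  have numerator_nonneg: "0 \<le> (t - 2) * exp t + t + 2" if "0 \<le> t" for t :: real
  proof -
    have "(\<lambda>r. (r - 2) * exp r + r + 2) 0 \<le> (\<lambda>r. (r - 2) * exp r + r + 2) t"
      by (rule deriv_nonneg_imp_mono[where g' = "\<lambda>r. (r - 1) * exp r + 1"])
        (use that deriv_nonneg in \<open>auto intro!: derivative_eq_intros simp: algebra_simps\<close>)
    then show ?thesis
      by simp
  qed
  show ?thesis
  proof (rule deriv_nonneg_imp_mono[where g = "\<lambda>t. (exp t - 1 - t) / t\<^sup>2"
        and g' = "\<lambda>t. ((t - 2) * exp t + t + 2) / t ^ 3"])
    fix t
    assume "t \<in> {x..a}"
    then have "0 < t"
      using assms by auto
    then show "((\<lambda>t. (exp t - 1 - t) / t\<^sup>2) has_real_derivative ((t - 2) * exp t + t + 2) / t ^ 3) (at t)"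
      by (auto intro!: derivative_eq_intros) (simp add: field_simps eval_nat_numeral)
    show "0 \<le> ((t - 2) * exp t + t + 2) / t ^ 3"
      using \<open>0 < t\<close> numerator_nonneg[of t] by simp
  qed (use assms in auto)
qed

definition bennett_psi :: "real \<Rightarrow> real \<Rightarrow> real" where
  "bennett_psi b l = (exp (l * b) - 1 - l * b) / b\<^sup>2"

lemma bennett_psi_nonneg: "0 \<le> bennett_psi b l"
proof -
  have "0 \<le> exp (l * b) - 1 - l * b"
    using exp_ge_add_one_self[of "l * b"] by linarith
  then show ?thesis
    unfolding bennett_psi_def by simp
qed

lemma exp_le_bennett:
  fixes x b l :: real
  assumes "x \<le> b" "0 < b" "0 < l"
  shows "exp (l * x) \<le> 1 + l * x + x\<^sup>2 * bennett_psi b l"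
proof (cases "x \<le> 0")
  case True
  have "exp (l * x) - 1 - l * x \<le> l\<^sup>2 * x\<^sup>2 / 2"
    using exp_le_quadratic_of_nonpos[of "l * x"] True assms
    by (simp add: mult_nonneg_nonpos power_mult_distrib)
  also have "\<dots> \<le> x\<^sup>2 * bennett_psi b l"
  proof -
    have "(l * b)\<^sup>2 / 2 \<le> exp (l * b) - 1 - l * b"
      using exp_lower_Taylor_quadratic[of "l * b"] assms by simp
    then have "l\<^sup>2 / 2 \<le> bennett_psi b l"
      using assms by (simp add: bennett_psi_def field_simps power_mult_distrib)
    then show ?thesis
      by (metis mult.commute mult_left_mono times_divide_eq_right zero_le_power2)
  qed
  finally show ?thesis
    by simp
next
  case False
  then have "exp (l * x) - 1 - l * x = (l * x)\<^sup>2 * ((exp (l * x) - 1 - l * x) / (l * x)\<^sup>2)"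
    using assms by simp
  also have "\<dots> \<le> (l * x)\<^sup>2 * ((exp (l * b) - 1 - l * b) / (l * b)\<^sup>2)"
    using False assms by (intro mult_left_mono exp_remainder_ratio_mono) auto
  also have "\<dots> = x\<^sup>2 * bennett_psi b l"
    using assms by (simp add: bennett_psi_def power_mult_distrib)
  finally show ?thesis
    by simp
qed

lemma w_ln_w_lower_bound:
  fixes w :: real
  assumes "1 \<le> w"
  shows "0 \<le> 2 * w * ln w - 5 * w + 29"
proof -
  have ln_ge: "real k \<le> ln w" if "3 ^ k \<le> w" for k :: nat
  proof -
    have "exp (real k) = exp 1 ^ k"
      by (simp add: exp_of_nat_mult[symmetric])
    also have "\<dots> \<le> 3 ^ k"
      by (rule power_mono[OF exp_le]) simp
    finally show ?thesis
      using that assms by (subst ln_ge_iff) auto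
  qed
  have "0 \<le> ln w"
    using assms by simp
  consider "w \<le> 3" | "3 \<le> w" "w \<le> 9" | "9 \<le> w" "w \<le> 27" | "27 \<le> w"
    by linarith
  then show ?thesis
  proof cases
    case 1
    then show ?thesis
      using \<open>0 \<le> ln w\<close> assms by (smt (verit) mult_nonneg_nonneg)
  next
    case 2
    then have "2 * w * 1 \<le> 2 * w * ln w"
      using ln_ge[of 1] assms by (intro mult_left_mono) auto
    then show ?thesis
      using 2 by linarith
  next
    case 3
    then have "2 * w * 2 \<le> 2 * w * ln w"
      using ln_ge[of 2] assms by (intro mult_left_mono) auto
    then show ?thesis
      using 3 by linarith
  next
    case 4
    then have "2 * w * 3 \<le> 2 * w * ln w"
      using ln_ge[of 3] assms by (intro mult_left_mono) auto
    then show ?thesis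
      using assms by linarith
  qed
qed

lemma bennett_h_lower_bound:
  fixes u :: real
  assumes "0 \<le> u"
  shows "u\<^sup>2 \<le> (10 + u / 3) * ((1 + u) * ln (1 + u) - u)"
proof -
  define F' where "F' = (\<lambda>u::real. ((1 + u) * ln (1 + u) - u) / 3 + (10 + u / 3) * ln (1 + u) - 2 * u)"
  have F'_nonneg: "0 \<le> F' t" if "0 \<le> t" for t
  proof -
    have "F' 0 \<le> F' t"
    proof (rule deriv_nonneg_imp_mono[where g = F' and g' = "\<lambda>s. 2/3 * ln (1 + s) + (10 + s/3) / (1 + s) - 2"])
      fix s :: real
      assume "s \<in> {0..t}"
      then have "0 \<le> s"
        by simp
      then show "(F' has_real_derivative 2/3 * ln (1 + s) + (10 + s/3) / (1 + s) - 2) (at s)"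
        unfolding F'_def by (auto intro!: derivative_eq_intros simp: field_simps add_nonneg_eq_0_iff)
      have "0 \<le> (2 * (1 + s) * ln (1 + s) - 5 * (1 + s) + 29) / (3 * (1 + s))"
        using w_ln_w_lower_bound[of "1 + s"] \<open>0 \<le> s\<close> by auto
      also have "\<dots> = 2/3 * ln (1 + s) + (10 + s/3) / (1 + s) - 2"
        using \<open>0 \<le> s\<close> by (simp add: field_simps)
      finally show "0 \<le> 2/3 * ln (1 + s) + (10 + s/3) / (1 + s) - 2" .
    qed (use that in auto)
    then show ?thesis
      by (simp add: F'_def)
  qed
  define F where "F = (\<lambda>u::real. (10 + u / 3) * ((1 + u) * ln (1 + u) - u) - u\<^sup>2)"
  have "F 0 \<le> F u"
  proof (rule deriv_nonneg_imp_mono[where g = F and g' = F'])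
    fix t :: real
    assume "t \<in> {0..u}"
    then show "(F has_real_derivative F' t) (at t)"
      unfolding F_def F'_def by (auto intro!: derivative_eq_intros simp: field_simps add_nonneg_eq_0_iff)
    show "0 \<le> F' t"
      using F'_nonneg \<open>t \<in> {0..u}\<close> by auto
  qed (use assms in auto)
  then show ?thesis
    by (simp add: F_def)
qed

text \<open>The witness is Bennett's optimal exponent \<open>ln (1 + b \<rho> / v) / b\<close>.\<close>
lemma bennett_exponent_le_bernstein:
  fixes b \<rho> v D :: real
  assumes "0 < b" "0 < \<rho>" "0 \<le> v" and D: "10 * v + b * \<rho> / 3 \<le> D"
  shows "\<exists>l>0. - (l * \<rho>) + v * bennett_psi b l \<le> - (\<rho>\<^sup>2 / D)"
proof -
  have "0 < b * \<rho>"
    using assms by simp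
  show ?thesis
  proof (cases "v = 0")
    case True
    have "\<rho>\<^sup>2 / D \<le> \<rho>\<^sup>2 / (b * \<rho> / 3)"
      using D True \<open>0 < b * \<rho>\<close> by (intro divide_left_mono mult_pos_pos) auto
    also have "\<dots> = 3 / b * \<rho>"
      using assms by (simp add: field_simps power2_eq_square)
    finally show ?thesis
      using True assms by (intro exI[of _ "3 / b"]) auto
  next
    case False
    then have "0 < v"
      using assms by simp
    define u where "u = b * \<rho> / v"
    define l where "l = ln (1 + u) / b"
    have "0 < u"
      unfolding u_def using assms \<open>0 < v\<close> by simp
    have "0 < l"
      unfolding l_def using \<open>0 < u\<close> assms by simp
    have \<rho>_eq: "\<rho> = u * v / b"
      unfolding u_def using assms \<open>0 < v\<close> by simp
    have exponent_eq: "- (l * \<rho>) + v * bennett_psi b l = - (v / b\<^sup>2 * ((1 + u) * ln (1 + u) - u))"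
      using assms \<open>0 < u\<close> by (simp add: \<rho>_eq l_def bennett_psi_def field_simps power2_eq_square)
    have "\<rho>\<^sup>2 / D \<le> \<rho>\<^sup>2 / (10 * v + b * \<rho> / 3)"
      using D \<open>0 < v\<close> \<open>0 < b * \<rho>\<close> by (intro divide_left_mono add_pos_nonneg mult_pos_pos) auto
    also have "\<dots> = v / b\<^sup>2 * (u\<^sup>2 / (10 + u / 3))"
    proof -
      have "10 * v + b * \<rho> / 3 = v * (10 + u / 3)" "\<rho>\<^sup>2 = v * (v / b\<^sup>2 * u\<^sup>2)"
        using assms by (simp_all add: \<rho>_eq field_simps power2_eq_square)
      then show ?thesis
        using \<open>0 < v\<close> by simp
    qed
    also have "\<dots> \<le> v / b\<^sup>2 * ((1 + u) * ln (1 + u) - u)"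
      using bennett_h_lower_bound[of u] \<open>0 < u\<close> \<open>0 < v\<close>
      by (intro mult_left_mono) (auto simp: divide_le_eq mult.commute)
    finally show ?thesis
      using \<open>0 < l\<close> exponent_eq by (intro exI[of _ l]) auto
  qed
qed

lemma bernstein_variance_factor_le:
  fixes \<eta> :: real
  assumes "1 \<le> \<eta>"
  shows "5 * (1 + \<eta> * (\<eta> - 1) / 2)\<^sup>2 \<le> (1 + sqrt 2 * \<eta> * (2 * \<eta> - 1))\<^sup>2"
proof -
  have "7 / 5 \<le> sqrt (2::real)"
    by (rule real_le_rsqrt) (simp add: power2_eq_square)
  moreover have "0 \<le> 2 * (\<eta> * \<eta>) - \<eta>"
    using assms mult_left_mono[of 1 \<eta> \<eta>] by simp
  ultimately have "7 / 5 * (2 * (\<eta> * \<eta>) - \<eta>) \<le> sqrt 2 * (2 * (\<eta> * \<eta>) - \<eta>)"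
    by (rule mult_right_mono)
  moreover have "\<eta> \<le> \<eta> * \<eta>"
    using assms mult_left_mono[of 1 \<eta> \<eta>] by simp
  moreover have "sqrt 2 * \<eta> * (2 * \<eta> - 1) = sqrt 2 * (2 * (\<eta> * \<eta>) - \<eta>)"
    by (simp add: algebra_simps)
  moreover have "9 / 4 * (1 + \<eta> * (\<eta> - 1) / 2) = 9 / 4 + 9 / 8 * (\<eta> * \<eta>) - 9 / 8 * \<eta>"
    by (simp add: field_simps)
  ultimately have "9 / 4 * (1 + \<eta> * (\<eta> - 1) / 2) \<le> 1 + sqrt 2 * \<eta> * (2 * \<eta> - 1)"
    using assms by argo
  moreover have "0 \<le> 1 + \<eta> * (\<eta> - 1) / 2"
    using assms by simp
  ultimately have "(9 / 4 * (1 + \<eta> * (\<eta> - 1) / 2))\<^sup>2 \<le> (1 + sqrt 2 * \<eta> * (2 * \<eta> - 1))\<^sup>2"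
    by (intro power_mono) auto
  moreover have "(9 / 4 * (1 + \<eta> * (\<eta> - 1) / 2))\<^sup>2 = 81 / 16 * (1 + \<eta> * (\<eta> - 1) / 2)\<^sup>2"
    unfolding power_mult_distrib by (simp add: power2_eq_square)
  ultimately show ?thesis
    using zero_le_power2[of "1 + \<eta> * (\<eta> - 1) / 2"] by linarith
qed

section \<open>Expectations on a finite state space\<close>

lemma expectation_finite:
  fixes p :: "'z::finite pmf" and f :: "'z \<Rightarrow> real"
  shows "measure_pmf.expectation p f = (\<Sum>z\<in>UNIV. pmf p z * f z)"
  by (subst integral_measure_pmf[of UNIV]) auto

lemma variance_finite:
  fixes p :: "'z::finite pmf" and f :: "'z \<Rightarrow> real"
  shows "measure_pmf.variance p f = (\<Sum>z\<in>UNIV. pmf p z * (f z - measure_pmf.expectation p f)\<^sup>2)"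
  by (rule expectation_finite)

lemma sum_pmf_UNIV: "(\<Sum>z\<in>UNIV. pmf p z) = 1"
  for p :: "'z::finite pmf"
  by (rule sum_pmf_eq_1) auto

lemma expectation_diff_finite:
  fixes p q :: "'z::finite pmf" and f :: "'z \<Rightarrow> real"
  shows "measure_pmf.expectation q f - measure_pmf.expectation p f
           = (\<Sum>z\<in>UNIV. (pmf q z - pmf p z) * (f z - c))"
proof -
  have "(\<Sum>z\<in>UNIV. (pmf q z - pmf p z) * (f z - c))
      = (\<Sum>z\<in>UNIV. (pmf q z * f z - pmf p z * f z) - (c * pmf q z - c * pmf p z))"
    by (rule sum.cong) (auto simp: algebra_simps)
  also have "\<dots> = (\<Sum>z\<in>UNIV. pmf q z * f z) - (\<Sum>z\<in>UNIV. pmf p z * f z)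
      - (c * (\<Sum>z\<in>UNIV. pmf q z) - c * (\<Sum>z\<in>UNIV. pmf p z))"
    by (simp add: sum_subtractf sum_distrib_left)
  finally show ?thesis
    by (simp add: expectation_finite sum_pmf_UNIV)
qed

lemma variance_le_sum_sq_dev:
  fixes p :: "'z::finite pmf" and f :: "'z \<Rightarrow> real"
  shows "measure_pmf.variance p f \<le> (\<Sum>z\<in>UNIV. pmf p z * (f z - c)\<^sup>2)"
proof -
  define e where "e = measure_pmf.expectation p f"
  have var_eq: "measure_pmf.variance p f = (\<Sum>z\<in>UNIV. pmf p z * (f z - e)\<^sup>2)"
    by (simp add: variance_finite e_def)
  have "(\<Sum>z\<in>UNIV. pmf p z * (f z - c)\<^sup>2)
      = (\<Sum>z\<in>UNIV. pmf p z * (f z - e)\<^sup>2)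
        + 2 * (e - c) * ((\<Sum>z\<in>UNIV. pmf p z * f z) - e * (\<Sum>z\<in>UNIV. pmf p z))
        + (e - c)\<^sup>2 * (\<Sum>z\<in>UNIV. pmf p z)"
    by (simp add: power2_eq_square algebra_simps sum.distrib sum_subtractf sum_distrib_left)
  also have "\<dots> = measure_pmf.variance p f + (e - c)\<^sup>2"
    unfolding var_eq by (simp add: e_def expectation_finite[of p f] sum_pmf_UNIV)
  finally show ?thesis
    by simp
qed

lemma sum_abs_deviation_le_sqrt_variance:
  fixes p :: "'z::finite pmf" and f :: "'z \<Rightarrow> real"
  shows "(\<Sum>z\<in>UNIV. pmf p z * \<bar>f z - measure_pmf.expectation p f\<bar>) \<le> sqrt (measure_pmf.variance p f)"
proof -
  define e where "e = measure_pmf.expectation p f"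
  define d where "d = (\<Sum>z\<in>UNIV. pmf p z * \<bar>f z - e\<bar>)"
  have var_eq: "measure_pmf.variance p f = (\<Sum>z\<in>UNIV. pmf p z * (f z - e)\<^sup>2)"
    by (simp add: variance_finite e_def)
  have "0 \<le> (\<Sum>z\<in>UNIV. pmf p z * (\<bar>f z - e\<bar> - d)\<^sup>2)"
    by (intro sum_nonneg mult_nonneg_nonneg) auto
  also have "\<dots> = (\<Sum>z\<in>UNIV. pmf p z * (f z - e)\<^sup>2) - 2 * d * (\<Sum>z\<in>UNIV. pmf p z * \<bar>f z - e\<bar>)
      + d\<^sup>2 * (\<Sum>z\<in>UNIV. pmf p z)"
    by (simp add: power2_eq_square algebra_simps sum.distrib sum_subtractf sum_distrib_left)
  also have "\<dots> = measure_pmf.variance p f - d\<^sup>2"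
    unfolding var_eq by (simp add: sum_pmf_UNIV d_def power2_eq_square)
  finally have "d\<^sup>2 \<le> measure_pmf.variance p f"
    by simp
  then show ?thesis
    unfolding d_def e_def by (rule real_le_rsqrt)
qed

definition column_regular :: "real \<Rightarrow> ('z \<Rightarrow> 'z pmf) \<Rightarrow> bool" where
  "column_regular \<eta> K \<longleftrightarrow> (\<forall>x y z. pmf (K y) x \<le> \<eta> * pmf (K z) x)"

lemma column_regular_expectation_diff_le_sqrt_variance:
  fixes K :: "'z::finite \<Rightarrow> 'z pmf" and f :: "'z \<Rightarrow> real"
  assumes "column_regular \<eta> K" "1 \<le> \<eta>"
  shows "measure_pmf.expectation (K x) f - measure_pmf.expectation (K x') f
           \<le> (\<eta> - 1) * sqrt (measure_pmf.variance (K x') f)"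
proof -
  define e where "e = measure_pmf.expectation (K x') f"
  have pmf_diff: "\<bar>pmf (K x) z - pmf (K x') z\<bar> \<le> (\<eta> - 1) * pmf (K x') z" for z
  proof -
    have "pmf (K x) z \<le> \<eta> * pmf (K x') z"
      using assms(1) by (auto simp: column_regular_def)
    then have up: "pmf (K x) z - pmf (K x') z \<le> (\<eta> - 1) * pmf (K x') z"
      by (simp add: algebra_simps)
    have "pmf (K x') z \<le> \<eta> * pmf (K x) z"
      using assms(1) by (auto simp: column_regular_def)
    then have "pmf (K x') z - pmf (K x) z \<le> (1 - 1 / \<eta>) * pmf (K x') z"
      using assms(2) by (simp add: field_simps)
    also have "\<dots> \<le> (\<eta> - 1) * pmf (K x') z"
    proof (rule mult_right_mono)
      have "0 \<le> (\<eta> - 1)\<^sup>2 / \<eta>"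
        using assms(2) by simp
      then show "1 - 1 / \<eta> \<le> \<eta> - 1"
        using assms(2) by (simp add: power2_eq_square field_simps)
    qed simp
    finally show ?thesis
      using up by (simp add: abs_le_iff)
  qed
  have "measure_pmf.expectation (K x) f - e = (\<Sum>z\<in>UNIV. (pmf (K x) z - pmf (K x') z) * (f z - e))"
    unfolding e_def by (rule expectation_diff_finite)
  also have "\<dots> \<le> (\<Sum>z\<in>UNIV. (\<eta> - 1) * (pmf (K x') z * \<bar>f z - e\<bar>))"
  proof (rule sum_mono)
    fix z
    have "(pmf (K x) z - pmf (K x') z) * (f z - e) \<le> \<bar>pmf (K x) z - pmf (K x') z\<bar> * \<bar>f z - e\<bar>"
      by (metis abs_ge_self abs_mult)
    also have "\<dots> \<le> (\<eta> - 1) * pmf (K x') z * \<bar>f z - e\<bar>"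
      by (intro mult_right_mono pmf_diff) auto
    finally show "(pmf (K x) z - pmf (K x') z) * (f z - e) \<le> (\<eta> - 1) * (pmf (K x') z * \<bar>f z - e\<bar>)"
      by simp
  qed
  also have "\<dots> \<le> (\<eta> - 1) * sqrt (measure_pmf.variance (K x') f)"
    unfolding e_def sum_distrib_left[symmetric]
    using sum_abs_deviation_le_sqrt_variance assms(2) by (intro mult_left_mono) auto
  finally show ?thesis
    unfolding e_def .
qed

lemma column_regular_expectation_diff_le_oscillation:
  fixes K :: "'z::finite \<Rightarrow> 'z pmf" and g :: "'z \<Rightarrow> real"
  assumes "column_regular \<eta> K" "1 \<le> \<eta>" and osc: "\<And>y y'. g y - g y' \<le> \<omega>"
  shows "measure_pmf.expectation (K x) g - measure_pmf.expectation (K x') g \<le> (1 - 1 / \<eta>) * \<omega>"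
proof -
  \<comment> \<open>Centred at \<open>min g\<close>, only the excess of \<open>K x\<close> over \<open>K x'\<close> can contribute.\<close>
  define m where "m = Min (range g)"
  have m_le: "m \<le> g y" for y
    unfolding m_def by (rule Min_le) auto
  have "m \<in> range g"
    unfolding m_def by (rule Min_in) auto
  then obtain y0 where "m = g y0"
    by auto
  have "measure_pmf.expectation (K x) g - measure_pmf.expectation (K x') g
      = (\<Sum>z\<in>UNIV. (pmf (K x) z - pmf (K x') z) * (g z - m))"
    by (rule expectation_diff_finite)
  also have "\<dots> \<le> (\<Sum>z\<in>UNIV. (1 - 1 / \<eta>) * (pmf (K x) z * (g z - m)))"
  proof (rule sum_mono)
    fix z
    have "pmf (K x) z \<le> \<eta> * pmf (K x') z"
      using assms(1) by (auto simp: column_regular_def)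
    then have "pmf (K x) z - pmf (K x') z \<le> (1 - 1 / \<eta>) * pmf (K x) z"
      using assms(2) by (simp add: field_simps)
    then show "(pmf (K x) z - pmf (K x') z) * (g z - m) \<le> (1 - 1 / \<eta>) * (pmf (K x) z * (g z - m))"
      using m_le[of z] by (metis mult.assoc mult_right_mono diff_ge_0_iff_ge)
  qed
  also have "\<dots> \<le> (1 - 1 / \<eta>) * \<omega>"
  proof -
    have "(\<Sum>z\<in>UNIV. pmf (K x) z * (g z - m)) \<le> (\<Sum>z\<in>UNIV. pmf (K x) z * \<omega>)"
      using osc \<open>m = g y0\<close> by (intro sum_mono mult_left_mono) auto
    then have "(\<Sum>z\<in>UNIV. pmf (K x) z * (g z - m)) \<le> \<omega>"
      by (simp add: sum_pmf_UNIV flip: sum_distrib_right)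
    then show ?thesis
      using assms(2) by (simp add: mult_left_mono flip: sum_distrib_left)
  qed
  finally show ?thesis .
qed

lemma variance_add_le:
  fixes p :: "'z::finite pmf" and f g :: "'z \<Rightarrow> real"
  assumes osc: "\<And>y y'. g y - g y' \<le> \<omega>"
  shows "measure_pmf.variance p (\<lambda>z. f z + g z) \<le> (sqrt (measure_pmf.variance p f) + \<omega> / 2)\<^sup>2"
proof -
  define c where "c = (Max (range g) + Min (range g)) / 2"
  have g_mid: "\<bar>g z - c\<bar> \<le> \<omega> / 2" for z
  proof -
    have "Max (range g) \<in> range g" "Min (range g) \<in> range g"
      by (auto intro!: Max_in Min_in)
    then obtain y1 y2 where "Max (range g) = g y1" "Min (range g) = g y2"
      by (metis rangeE)
    moreover have "g z \<le> Max (range g)" "Min (range g) \<le> g z"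
      by auto
    ultimately show ?thesis
      using osc[of y1 y2] unfolding c_def by (auto simp: abs_le_iff field_simps)
  qed
  have "0 \<le> \<omega>"
    using osc[of undefined undefined] by simp
  define e where "e = measure_pmf.expectation p f"
  define s where "s = sqrt (measure_pmf.variance p f)"
  have s_sq: "s\<^sup>2 = (\<Sum>z\<in>UNIV. pmf p z * (f z - e)\<^sup>2)"
    unfolding s_def using measure_pmf.variance_positive[of p f] by (simp add: variance_finite e_def)
  have pointwise: "(f z + g z - (e + c))\<^sup>2 \<le> (f z - e)\<^sup>2 + \<omega> * \<bar>f z - e\<bar> + (\<omega> / 2)\<^sup>2" for z
  proof -
    have "2 * ((f z - e) * (g z - c)) \<le> 2 * (\<bar>f z - e\<bar> * \<bar>g z - c\<bar>)"
      by (simp flip: abs_mult)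
    also have "\<dots> \<le> 2 * (\<bar>f z - e\<bar> * (\<omega> / 2))"
      by (intro mult_left_mono g_mid) simp_all
    finally have "2 * ((f z - e) * (g z - c)) \<le> \<omega> * \<bar>f z - e\<bar>"
      by (simp add: mult.commute)
    moreover have "(g z - c)\<^sup>2 \<le> (\<omega> / 2)\<^sup>2"
      using g_mid[of z] by (metis abs_ge_zero power2_abs power_mono)
    moreover have "(f z + g z - (e + c))\<^sup>2 = (f z - e)\<^sup>2 + 2 * ((f z - e) * (g z - c)) + (g z - c)\<^sup>2"
      by (simp add: power2_eq_square algebra_simps)
    ultimately show ?thesis
      by linarith
  qed
  have "measure_pmf.variance p (\<lambda>z. f z + g z) \<le> (\<Sum>z\<in>UNIV. pmf p z * (f z + g z - (e + c))\<^sup>2)"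
    by (rule variance_le_sum_sq_dev)
  also have "\<dots> \<le> (\<Sum>z\<in>UNIV. pmf p z * ((f z - e)\<^sup>2 + \<omega> * \<bar>f z - e\<bar> + (\<omega> / 2)\<^sup>2))"
    by (intro sum_mono mult_left_mono pointwise) auto
  also have "\<dots> = s\<^sup>2 + \<omega> * (\<Sum>z\<in>UNIV. pmf p z * \<bar>f z - e\<bar>) + (\<omega> / 2)\<^sup>2"
    unfolding s_sq by (simp add: sum_pmf_UNIV algebra_simps sum.distrib sum_distrib_left
        flip: sum_distrib_right)
  also have "\<dots> \<le> s\<^sup>2 + \<omega> * s + (\<omega> / 2)\<^sup>2"
    using sum_abs_deviation_le_sqrt_variance[of p f] \<open>0 \<le> \<omega>\<close>
    unfolding s_def e_def by (simp add: mult_left_mono)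
  also have "\<dots> = (s + \<omega> / 2)\<^sup>2"
    by (simp add: power2_eq_square algebra_simps)
  finally show ?thesis
    unfolding s_def .
qed

lemma bennett_mgf_le:
  fixes p :: "'z::finite pmf" and g :: "'z \<Rightarrow> real"
  assumes osc: "\<And>y y'. g y - g y' \<le> b" and "0 < b" "0 < l"
  shows "measure_pmf.expectation p (\<lambda>z. exp (l * (g z - measure_pmf.expectation p g)))
           \<le> exp (measure_pmf.variance p g * bennett_psi b l)"
proof -
  define e where "e = measure_pmf.expectation p g"
  have "g z - e \<le> b" for z
  proof -
    have "g z - e = (\<Sum>y\<in>UNIV. pmf p y * (g z - g y))"
      by (simp add: e_def expectation_finite sum_pmf_UNIV right_diff_distrib sum_subtractf
          flip: sum_distrib_right)
    also have "\<dots> \<le> (\<Sum>y\<in>UNIV. pmf p y * b)"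
      using osc by (intro sum_mono mult_left_mono) auto
    finally show ?thesis
      by (simp add: sum_pmf_UNIV flip: sum_distrib_right)
  qed
  then have "measure_pmf.expectation p (\<lambda>z. exp (l * (g z - e)))
      \<le> (\<Sum>z\<in>UNIV. pmf p z * (1 + l * (g z - e) + (g z - e)\<^sup>2 * bennett_psi b l))"
    unfolding expectation_finite[of p]
    using assms by (intro sum_mono mult_left_mono exp_le_bennett) auto
  also have "\<dots> = (\<Sum>z\<in>UNIV. pmf p z + l * (pmf p z * (g z - e)) + bennett_psi b l * (pmf p z * (g z - e)\<^sup>2))"
    by (rule sum.cong) (auto simp: algebra_simps)
  also have "\<dots> = (\<Sum>z\<in>UNIV. pmf p z) + l * (\<Sum>z\<in>UNIV. pmf p z * (g z - e))
      + bennett_psi b l * (\<Sum>z\<in>UNIV. pmf p z * (g z - e)\<^sup>2)"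
    by (simp only: sum.distrib sum_distrib_left)
  also have "(\<Sum>z\<in>UNIV. pmf p z * (g z - e)) = 0"
    by (simp add: e_def expectation_finite sum_pmf_UNIV right_diff_distrib sum_subtractf
        flip: sum_distrib_right)
  also have "(\<Sum>z\<in>UNIV. pmf p z * (g z - e)\<^sup>2) = measure_pmf.variance p g"
    by (simp add: variance_finite e_def)
  also have "(\<Sum>z\<in>UNIV. pmf p z) + l * 0 + bennett_psi b l * measure_pmf.variance p g
      \<le> exp (measure_pmf.variance p g * bennett_psi b l)"
    using exp_ge_add_one_self[of "measure_pmf.variance p g * bennett_psi b l"]
    by (simp add: sum_pmf_UNIV mult.commute)
  finally show ?thesis
    unfolding e_def .
qed

section \<open>The Doob martingale of a path\<close>

text \<open>\<open>value_fun P \<phi> H l x\<close> is the conditional expectation of \<open>\<Sum>h=l..H. \<phi> h (X h)\<close> given \<open>X l = x\<close>.\<close>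
function value_fun :: "(nat \<Rightarrow> 'z \<Rightarrow> 'z pmf) \<Rightarrow> (nat \<Rightarrow> 'z \<Rightarrow> real) \<Rightarrow> nat \<Rightarrow> nat \<Rightarrow> 'z \<Rightarrow> real"
  where
  "value_fun P \<phi> H l x = (if H < l then 0
     else \<phi> l x + measure_pmf.expectation (P l x) (value_fun P \<phi> H (Suc l)))"
  by auto
termination
  by (relation "Wellfounded.measure (\<lambda>(P, \<phi>, H, l, x). Suc H - l)") auto

declare value_fun.simps [simp del]

lemma value_fun_beyond [simp]: "H < l \<Longrightarrow> value_fun P \<phi> H l = (\<lambda>_. 0)"
  by (auto simp: value_fun.simps)

lemma value_fun_eq:
  "l \<le> H \<Longrightarrow> value_fun P \<phi> H l x = \<phi> l x + measure_pmf.expectation (P l x) (value_fun P \<phi> H (Suc l))"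
  by (simp add: value_fun.simps)

text \<open>For \<open>l = 1\<close> the conditioning kernel is \<open>\<mu>\<close>, and the junk coordinate \<open>x 0\<close> is ignored.\<close>
definition doob_increment ::
    "'z pmf \<Rightarrow> (nat \<Rightarrow> 'z \<Rightarrow> 'z pmf) \<Rightarrow> (nat \<Rightarrow> 'z \<Rightarrow> real) \<Rightarrow> nat \<Rightarrow> nat \<Rightarrow> (nat \<Rightarrow> 'z) \<Rightarrow> real" where
  "doob_increment \<mu> P \<phi> H l x =
     value_fun P \<phi> H l (x l) - measure_pmf.expectation (step_kernel \<mu> P (l - 1) (x (l - 1))) (value_fun P \<phi> H l)"

lemma sum_doob_increments_upto:
  assumes "n \<le> H"
  shows "(\<Sum>l=1..n. doob_increment \<mu> P \<phi> H l x) = (\<Sum>l=1..n. \<phi> l (x l))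
     + measure_pmf.expectation (step_kernel \<mu> P n (x n)) (value_fun P \<phi> H (Suc n))
     - measure_pmf.expectation \<mu> (value_fun P \<phi> H 1)"
  using assms
proof (induction n)
  case 0
  then show ?case
    by (simp add: step_kernel_def)
next
  case (Suc n)
  then have "doob_increment \<mu> P \<phi> H (Suc n) x = \<phi> (Suc n) (x (Suc n))
     + measure_pmf.expectation (step_kernel \<mu> P (Suc n) (x (Suc n))) (value_fun P \<phi> H (Suc (Suc n)))
     - measure_pmf.expectation (step_kernel \<mu> P n (x n)) (value_fun P \<phi> H (Suc n))"
    by (simp add: doob_increment_def value_fun_eq step_kernel_def)
  then show ?case
    using Suc by simp
qed

lemma sum_doob_increments:
  "(\<Sum>l=1..H. doob_increment \<mu> P \<phi> H l x)
     = (\<Sum>l=1..H. \<phi> l (x l)) - measure_pmf.expectation \<mu> (value_fun P \<phi> H 1)"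
  using sum_doob_increments_upto[of H H \<mu> P \<phi> x] by simp

lemma sum_doob_increments_Suc_upd:
  "(\<Sum>l=1..Suc n. doob_increment \<mu> P \<phi> H l (x(Suc n := z))) = (\<Sum>l=1..n. doob_increment \<mu> P \<phi> H l x)
     + (value_fun P \<phi> H (Suc n) z
        - measure_pmf.expectation (step_kernel \<mu> P n (x n)) (value_fun P \<phi> H (Suc n)))"
proof -
  have "(\<Sum>l=1..n. doob_increment \<mu> P \<phi> H l (x(Suc n := z))) = (\<Sum>l=1..n. doob_increment \<mu> P \<phi> H l x)"
    by (rule sum.cong) (auto simp: doob_increment_def)
  then show ?thesis
    by (simp add: doob_increment_def)
qed

lemma finite_set_pmf_markov_path:
  fixes \<mu> :: "'z::finite pmf"
  shows "finite (set_pmf (markov_path \<mu> P n))"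
  by (induction n) auto

lemma integrable_markov_path [simp]:
  fixes \<mu> :: "'z::finite pmf" and F :: "(nat \<Rightarrow> 'z) \<Rightarrow> real"
  shows "integrable (measure_pmf (markov_path \<mu> P n)) F"
  by (rule integrable_measure_pmf_finite[OF finite_set_pmf_markov_path])

lemma expectation_bind_pmf_finite:
  fixes f :: "'b \<Rightarrow> real"
  assumes "finite (set_pmf p)" "\<And>x. x \<in> set_pmf p \<Longrightarrow> finite (set_pmf (q x))"
  shows "measure_pmf.expectation (bind_pmf p q) f
           = measure_pmf.expectation p (\<lambda>x. measure_pmf.expectation (q x) f)"
  using assms by (simp add: pmf_expectation_bind[of "set_pmf p"] integral_measure_pmf[of "set_pmf p"])

lemma expectation_markov_path_Suc:
  fixes \<mu> :: "'z::finite pmf" and F :: "(nat \<Rightarrow> 'z) \<Rightarrow> real"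
  shows "measure_pmf.expectation (markov_path \<mu> P (Suc n)) F
       = measure_pmf.expectation (markov_path \<mu> P n)
           (\<lambda>x. measure_pmf.expectation (step_kernel \<mu> P n (x n)) (\<lambda>z. F (x(Suc n := z))))"
  by (simp add: expectation_bind_pmf_finite finite_set_pmf_markov_path)

lemma expectation_sum_doob_increments:
  fixes \<mu> :: "'z::finite pmf"
  shows "measure_pmf.expectation (markov_path \<mu> P n) (\<lambda>x. \<Sum>l=1..n. doob_increment \<mu> P \<phi> H l x) = 0"
proof (induction n)
  case 0
  then show ?case
    by simp
next
  case (Suc n)
  have step: "measure_pmf.expectation q (\<lambda>z. a + (f z - measure_pmf.expectation q f)) = a"
    for q :: "'z pmf" and a and f :: "'z \<Rightarrow> real"
    by (simp add: expectation_finite sum_pmf_UNIV algebra_simps sum.distrib sum_subtractf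
        flip: sum_distrib_left sum_distrib_right)
  have inner: "measure_pmf.expectation (step_kernel \<mu> P n (x n))
      (\<lambda>z. \<Sum>l=1..Suc n. doob_increment \<mu> P \<phi> H l (x(Suc n := z))) = (\<Sum>l=1..n. doob_increment \<mu> P \<phi> H l x)"
    for x
    unfolding sum_doob_increments_Suc_upd by (rule step)
  show ?case
    by (simp only: expectation_markov_path_Suc inner Suc.IH)
qed

lemma centred_sum_eq_sum_doob_increments:
  fixes \<mu> :: "'z::finite pmf"
  shows "(\<Sum>h=1..H. \<phi> h (x h) - measure_pmf.expectation (markov_path \<mu> P H) (\<lambda>x. \<phi> h (x h)))
           = (\<Sum>l=1..H. doob_increment \<mu> P \<phi> H l x)"
proof -
  have "0 = measure_pmf.expectation (markov_path \<mu> P H) (\<lambda>x. \<Sum>l=1..H. doob_increment \<mu> P \<phi> H l x)"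
    by (rule expectation_sum_doob_increments[symmetric])
  also have "\<dots> = measure_pmf.expectation (markov_path \<mu> P H) (\<lambda>x. \<Sum>h=1..H. \<phi> h (x h))
      - measure_pmf.expectation \<mu> (value_fun P \<phi> H 1)"
    by (simp only: sum_doob_increments) (simp add: Bochner_Integration.integral_diff)
  also have "\<dots> = (\<Sum>h=1..H. measure_pmf.expectation (markov_path \<mu> P H) (\<lambda>x. \<phi> h (x h)))
      - measure_pmf.expectation \<mu> (value_fun P \<phi> H 1)"
    by (simp add: Bochner_Integration.integral_sum)
  finally have "(\<Sum>h=1..H. measure_pmf.expectation (markov_path \<mu> P H) (\<lambda>x. \<phi> h (x h)))
      = measure_pmf.expectation \<mu> (value_fun P \<phi> H 1)"
    by simp
  then show ?thesis
    by (simp only: sum_subtractf sum_doob_increments)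
qed

lemma value_fun_oscillation:
  fixes P :: "nat \<Rightarrow> 'z::finite \<Rightarrow> 'z pmf"
  assumes "1 \<le> \<eta>" and reg: "\<And>h. 1 \<le> h \<Longrightarrow> column_regular \<eta> (P h)"
    and bound: "\<And>h z. h \<in> {1..H} \<Longrightarrow> \<bar>\<phi> h z\<bar> \<le> B" and "0 \<le> B" and "1 \<le> l"
  shows "value_fun P \<phi> H l y - value_fun P \<phi> H l y' \<le> 2 * \<eta> * B"
proof -
  have "0 \<le> 2 * \<eta> * B"
    using assms by simp
  show ?thesis
  proof (cases "l \<le> Suc H")
    case False
    then show ?thesis
      using \<open>0 \<le> 2 * \<eta> * B\<close> by simp
  next
    case True
    then show ?thesis
    proof (induction l arbitrary: y y' rule: inc_induct)
      case base
      then show ?case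
        using \<open>0 \<le> 2 * \<eta> * B\<close> by simp
    next
      case (step n)
      then have n: "n \<in> {1..H}"
        using \<open>1 \<le> l\<close> by auto
      have "\<phi> n y - \<phi> n y' \<le> 2 * B"
        using bound[OF n, of y] bound[OF n, of y'] by (simp add: abs_le_iff)
      moreover have "measure_pmf.expectation (P n y) (value_fun P \<phi> H (Suc n))
          - measure_pmf.expectation (P n y') (value_fun P \<phi> H (Suc n)) \<le> (1 - 1 / \<eta>) * (2 * \<eta> * B)"
        using n step.IH by (intro column_regular_expectation_diff_le_oscillation reg \<open>1 \<le> \<eta>\<close>) auto
      moreover have "(1 - 1 / \<eta>) * (2 * \<eta> * B) = 2 * \<eta> * B - 2 * B"
        using \<open>1 \<le> \<eta>\<close> by (simp add: field_simps)
      ultimately show ?case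
        using n by (simp add: value_fun_eq)
    qed
  qed
qed

lemma expectation_value_fun_oscillation:
  fixes P :: "nat \<Rightarrow> 'z::finite \<Rightarrow> 'z pmf"
  assumes "1 \<le> \<eta>" and reg: "\<And>h. 1 \<le> h \<Longrightarrow> column_regular \<eta> (P h)"
    and var: "\<And>l z. l \<in> {1..H} \<Longrightarrow> measure_pmf.variance (step_kernel \<mu> P (l - 1) z) (\<phi> l) \<le> m"
    and "0 \<le> m" and "1 \<le> l"
  shows "measure_pmf.expectation (P l y) (value_fun P \<phi> H (Suc l))
           - measure_pmf.expectation (P l y') (value_fun P \<phi> H (Suc l)) \<le> \<eta> * (\<eta> - 1) * sqrt m"
proof -
  have "0 \<le> \<eta> * (\<eta> - 1) * sqrt m"
    using assms by simp
  show ?thesis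
  proof (cases "l \<le> H")
    case False
    then show ?thesis
      using \<open>0 \<le> \<eta> * (\<eta> - 1) * sqrt m\<close> by simp
  next
    case True
    then show ?thesis
    proof (induction l arbitrary: y y' rule: inc_induct)
      case base
      then show ?case
        using \<open>0 \<le> \<eta> * (\<eta> - 1) * sqrt m\<close> by simp
    next
      case (step n)
      define R where "R x = measure_pmf.expectation (P (Suc n) x) (value_fun P \<phi> H (Suc (Suc n)))" for x
      have value_fun_Suc: "value_fun P \<phi> H (Suc n) = (\<lambda>x. \<phi> (Suc n) x + R x)"
        using step.hyps by (simp add: fun_eq_iff value_fun_eq R_def)
      have "1 \<le> n"
        using \<open>1 \<le> l\<close> step.hyps by simp
      have "measure_pmf.variance (P n y') (\<phi> (Suc n)) \<le> m"
        using var[of "Suc n" y'] step.hyps \<open>1 \<le> n\<close> by (simp add: step_kernel_def)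
      then have "measure_pmf.expectation (P n y) (\<phi> (Suc n)) - measure_pmf.expectation (P n y') (\<phi> (Suc n))
          \<le> (\<eta> - 1) * sqrt m"
        using column_regular_expectation_diff_le_sqrt_variance[OF reg[OF \<open>1 \<le> n\<close>] \<open>1 \<le> \<eta>\<close>, of y "\<phi> (Suc n)" y']
          \<open>1 \<le> \<eta>\<close> by (smt (verit) mult_left_mono real_sqrt_le_iff)
      moreover have "measure_pmf.expectation (P n y) R - measure_pmf.expectation (P n y') R
          \<le> (1 - 1 / \<eta>) * (\<eta> * (\<eta> - 1) * sqrt m)"
        using step.IH unfolding R_def
        by (intro column_regular_expectation_diff_le_oscillation reg \<open>1 \<le> n\<close> \<open>1 \<le> \<eta>\<close>)
      moreover have "(\<eta> - 1) * sqrt m + (1 - 1 / \<eta>) * (\<eta> * (\<eta> - 1) * sqrt m) = \<eta> * (\<eta> - 1) * sqrt m"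
        using \<open>1 \<le> \<eta>\<close> by (simp add: field_simps)
      ultimately show ?case
        unfolding value_fun_Suc
        by (simp add: Bochner_Integration.integral_add integrable_measure_pmf_finite)
    qed
  qed
qed

lemma variance_value_fun_le:
  fixes P :: "nat \<Rightarrow> 'z::finite \<Rightarrow> 'z pmf"
  assumes "1 \<le> \<eta>" and reg: "\<And>h. 1 \<le> h \<Longrightarrow> column_regular \<eta> (P h)"
    and var: "\<And>l z. l \<in> {1..H} \<Longrightarrow> measure_pmf.variance (step_kernel \<mu> P (l - 1) z) (\<phi> l) \<le> m"
    and "0 \<le> m" and "n < H"
  shows "measure_pmf.variance (step_kernel \<mu> P n z) (value_fun P \<phi> H (Suc n))
           \<le> (1 + \<eta> * (\<eta> - 1) / 2)\<^sup>2 * m"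
proof -
  define R where "R x = measure_pmf.expectation (P (Suc n) x) (value_fun P \<phi> H (Suc (Suc n)))" for x
  have "value_fun P \<phi> H (Suc n) = (\<lambda>x. \<phi> (Suc n) x + R x)"
    using \<open>n < H\<close> by (simp add: fun_eq_iff value_fun_eq R_def)
  moreover have "R y - R y' \<le> \<eta> * (\<eta> - 1) * sqrt m" for y y'
    unfolding R_def using assms by (intro expectation_value_fun_oscillation) auto
  ultimately have "measure_pmf.variance (step_kernel \<mu> P n z) (value_fun P \<phi> H (Suc n))
      \<le> (sqrt (measure_pmf.variance (step_kernel \<mu> P n z) (\<phi> (Suc n))) + \<eta> * (\<eta> - 1) * sqrt m / 2)\<^sup>2"
    by (simp add: variance_add_le)
  also have "\<dots> \<le> (sqrt m + \<eta> * (\<eta> - 1) * sqrt m / 2)\<^sup>2"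
  proof -
    have "0 \<le> \<eta> * (\<eta> - 1) * sqrt m"
      using assms by simp
    then show ?thesis
      using var[of "Suc n" z] \<open>n < H\<close> measure_pmf.variance_positive[of "step_kernel \<mu> P n z" "\<phi> (Suc n)"]
      by (intro power_mono add_mono add_nonneg_nonneg) auto
  qed
  also have "\<dots> = (1 + \<eta> * (\<eta> - 1) / 2)\<^sup>2 * m"
    using \<open>0 \<le> m\<close> by (simp add: power2_eq_square field_simps)
  finally show ?thesis .
qed

lemma mgf_sum_doob_increments_le:
  fixes P :: "nat \<Rightarrow> 'z::finite \<Rightarrow> 'z pmf"
  assumes osc: "\<And>n y y'. n < H \<Longrightarrow> value_fun P \<phi> H (Suc n) y - value_fun P \<phi> H (Suc n) y' \<le> b"
    and var: "\<And>n z. n < H \<Longrightarrow> measure_pmf.variance (step_kernel \<mu> P n z) (value_fun P \<phi> H (Suc n)) \<le> \<sigma>2"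
    and "0 < b" "0 < l" "n \<le> H"
  shows "measure_pmf.expectation (markov_path \<mu> P n) (\<lambda>x. exp (l * (\<Sum>i=1..n. doob_increment \<mu> P \<phi> H i x)))
           \<le> exp (real n * \<sigma>2 * bennett_psi b l)"
  using \<open>n \<le> H\<close>
proof (induction n)
  case 0
  then show ?case
    by simp
next
  case (Suc n)
  define A where "A x = (\<Sum>i=1..n. doob_increment \<mu> P \<phi> H i x)" for x
  define V where "V = value_fun P \<phi> H (Suc n)"
  have inner: "measure_pmf.expectation (step_kernel \<mu> P n (x n))
      (\<lambda>z. exp (l * (\<Sum>i=1..Suc n. doob_increment \<mu> P \<phi> H i (x(Suc n := z)))))
      \<le> exp (l * A x) * exp (\<sigma>2 * bennett_psi b l)" for x
  proof -
    let ?q = "step_kernel \<mu> P n (x n)"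
    have "measure_pmf.expectation ?q (\<lambda>z. exp (l * (\<Sum>i=1..Suc n. doob_increment \<mu> P \<phi> H i (x(Suc n := z)))))
        = exp (l * A x) * measure_pmf.expectation ?q (\<lambda>z. exp (l * (V z - measure_pmf.expectation ?q V)))"
      unfolding sum_doob_increments_Suc_upd A_def V_def by (simp add: distrib_left exp_add)
    also have "\<dots> \<le> exp (l * A x) * exp (measure_pmf.variance ?q V * bennett_psi b l)"
      using osc Suc.prems \<open>0 < b\<close> \<open>0 < l\<close> unfolding V_def
      by (intro mult_left_mono bennett_mgf_le) auto
    also have "\<dots> \<le> exp (l * A x) * exp (\<sigma>2 * bennett_psi b l)"
    proof -
      have "measure_pmf.variance ?q V * bennett_psi b l \<le> \<sigma>2 * bennett_psi b l"
        using var[of n "x n"] Suc.prems bennett_psi_nonneg unfolding V_def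
        by (intro mult_right_mono) auto
      then show ?thesis
        by simp
    qed
    finally show ?thesis .
  qed
  have "measure_pmf.expectation (markov_path \<mu> P (Suc n))
        (\<lambda>x. exp (l * (\<Sum>i=1..Suc n. doob_increment \<mu> P \<phi> H i x)))
      \<le> measure_pmf.expectation (markov_path \<mu> P n) (\<lambda>x. exp (l * A x) * exp (\<sigma>2 * bennett_psi b l))"
    unfolding expectation_markov_path_Suc
    by (rule integral_mono[OF integrable_markov_path integrable_markov_path inner])
  also have "\<dots> \<le> exp (real n * \<sigma>2 * bennett_psi b l) * exp (\<sigma>2 * bennett_psi b l)"
    using Suc by (simp add: A_def)
  also have "\<dots> = exp (real (Suc n) * \<sigma>2 * bennett_psi b l)"
    by (simp add: algebra_simps flip: exp_add)
  finally show ?case .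
qed

section \<open>Concentration\<close>

lemma prob_sum_Pi_pmf_gt_le:
  fixes p :: "'a pmf" and S :: "'a \<Rightarrow> real"
  assumes "finite I" "finite (set_pmf p)" "0 < l"
    and mgf: "measure_pmf.expectation p (\<lambda>x. exp (l * S x)) \<le> exp c"
  shows "measure_pmf.prob (Pi_pmf I dflt (\<lambda>_. p)) {X. (\<Sum>i\<in>I. S (X i)) > \<rho>}
           \<le> exp (- (l * \<rho>) + real (card I) * c)"
proof -
  let ?Q = "Pi_pmf I dflt (\<lambda>_. p)"
  have exp_sum_eq: "exp (l * (\<Sum>i\<in>I. S (X i))) = (\<Prod>i\<in>I. exp (l * S (X i)))" for X
    by (simp add: sum_distrib_left exp_sum[OF \<open>finite I\<close>])
  have int: "integrable ?Q (\<lambda>X. exp (l * (\<Sum>i\<in>I. S (X i))))"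
    unfolding exp_sum_eq using assms by (intro integrable_prod_Pi_pmf integrable_measure_pmf_finite)
  then have "set_integrable ?Q (space ?Q) (\<lambda>X. exp (l * (\<Sum>i\<in>I. S (X i))))"
    by (simp add: set_integrable_def)
  have "measure_pmf.prob ?Q {X. (\<Sum>i\<in>I. S (X i)) > \<rho>} \<le> measure_pmf.prob ?Q {X. (\<Sum>i\<in>I. S (X i)) \<ge> \<rho>}"
    by (intro measure_pmf.finite_measure_mono) auto
  also have "\<dots> \<le> exp (- l * \<rho>) * measure_pmf.expectation ?Q (\<lambda>X. exp (l * (\<Sum>i\<in>I. S (X i))))"
    using measure_pmf.Chernoff_ineq_ge[OF \<open>0 < l\<close> \<open>set_integrable _ _ _\<close>] set_integral_space[OF int]
    by simp
  also have "measure_pmf.expectation ?Q (\<lambda>X. exp (l * (\<Sum>i\<in>I. S (X i))))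
      = (\<Prod>i\<in>I. measure_pmf.expectation p (\<lambda>x. exp (l * S x)))"
    unfolding exp_sum_eq using assms by (intro expectation_prod_Pi_pmf integrable_measure_pmf_finite) auto
  also have "\<dots> \<le> (\<Prod>i\<in>I. exp c)"
    using mgf by (intro prod_mono conjI Bochner_Integration.integral_nonneg) auto
  also have "exp (- l * \<rho>) * (\<Prod>i\<in>I. exp c) = exp (- (l * \<rho>) + real (card I) * c)"
    by (simp add: algebra_simps flip: exp_add exp_of_nat_mult)
  finally show ?thesis
    by simp
qed

lemma mgf_centred_path_sum_le:
  fixes \<mu> :: "'z::finite pmf" and P :: "nat \<Rightarrow> 'z \<Rightarrow> 'z pmf"
  assumes "1 \<le> \<eta>" and reg: "\<And>h. 1 \<le> h \<Longrightarrow> column_regular \<eta> (P h)"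
    and bound: "\<And>h z. h \<in> {1..H} \<Longrightarrow> \<bar>\<phi> h z\<bar> \<le> B" and "0 < B"
    and var: "\<And>l z. l \<in> {1..H} \<Longrightarrow> measure_pmf.variance (step_kernel \<mu> P (l - 1) z) (\<phi> l) \<le> m"
    and "0 \<le> m" and "0 < l"
  shows "measure_pmf.expectation (markov_path \<mu> P H)
           (\<lambda>x. exp (l * (\<Sum>h=1..H. \<phi> h (x h) - measure_pmf.expectation (markov_path \<mu> P H) (\<lambda>x. \<phi> h (x h)))))
         \<le> exp (real H * ((1 + \<eta> * (\<eta> - 1) / 2)\<^sup>2 * m) * bennett_psi (2 * ((2 * \<eta> - 1) * B)) l)"
proof -
  have osc: "value_fun P \<phi> H (Suc n) y - value_fun P \<phi> H (Suc n) y' \<le> 2 * ((2 * \<eta> - 1) * B)" for n y y'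
  proof -
    have "value_fun P \<phi> H (Suc n) y - value_fun P \<phi> H (Suc n) y' \<le> 2 * \<eta> * B"
      using assms by (intro value_fun_oscillation) auto
    also have "\<dots> \<le> 2 * ((2 * \<eta> - 1) * B)"
      using assms by (simp add: algebra_simps)
    finally show ?thesis .
  qed
  show ?thesis
    unfolding centred_sum_eq_sum_doob_increments
    using osc variance_value_fun_le[OF \<open>1 \<le> \<eta>\<close> reg var \<open>0 \<le> m\<close>] assms
    by (intro mgf_sum_doob_increments_le) auto
qed

lemma markov_chain_bernstein_nondegenerate:
  fixes \<mu> :: "'z::finite pmf" and P :: "nat \<Rightarrow> 'z \<Rightarrow> 'z pmf"
  assumes "1 \<le> \<eta>" and reg: "\<And>h. 1 \<le> h \<Longrightarrow> column_regular \<eta> (P h)"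
    and bound: "\<And>h z. h \<in> {1..H} \<Longrightarrow> \<bar>\<phi> h z\<bar> \<le> B" and "0 < B"
    and var: "\<And>l z. l \<in> {1..H} \<Longrightarrow> measure_pmf.variance (step_kernel \<mu> P (l - 1) z) (\<phi> l) \<le> m"
    and "0 \<le> m" and "0 < \<rho>"
  shows "measure_pmf.prob (iid_paths \<mu> P H T)
           {X. (\<Sum>t=1..T. \<Sum>h=1..H. \<phi> h (X t h)
                 - measure_pmf.expectation (markov_path \<mu> P H) (\<lambda>x. \<phi> h (x h))) > \<rho>}
         \<le> exp (- (\<rho>\<^sup>2 / (2 * real T * real H * ((1 + sqrt 2 * \<eta> * (2 * \<eta> - 1))\<^sup>2 * m)
                          + 2 / 3 * ((2 * \<eta> - 1) * B) * \<rho>)))"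
    (is "measure_pmf.prob _ {X. ?Y X > \<rho>} \<le> exp (- (\<rho>\<^sup>2 / ?D))")
proof -
  define b where "b = 2 * ((2 * \<eta> - 1) * B)"
  define v where "v = real T * (real H * ((1 + \<eta> * (\<eta> - 1) / 2)\<^sup>2 * m))"
  have "10 * v + b * \<rho> / 3 \<le> ?D"
  proof -
    have "5 * (1 + \<eta> * (\<eta> - 1) / 2)\<^sup>2 * m \<le> (1 + sqrt 2 * \<eta> * (2 * \<eta> - 1))\<^sup>2 * m"
      using bernstein_variance_factor_le[OF \<open>1 \<le> \<eta>\<close>] \<open>0 \<le> m\<close> by (rule mult_right_mono)
    then have "2 * real T * real H * (5 * (1 + \<eta> * (\<eta> - 1) / 2)\<^sup>2 * m)
        \<le> 2 * real T * real H * ((1 + sqrt 2 * \<eta> * (2 * \<eta> - 1))\<^sup>2 * m)"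
      by (rule mult_left_mono) simp
    moreover have "10 * v = 2 * real T * real H * (5 * (1 + \<eta> * (\<eta> - 1) / 2)\<^sup>2 * m)"
      by (simp add: v_def)
    moreover have "b * \<rho> / 3 = 2 / 3 * ((2 * \<eta> - 1) * B) * \<rho>"
      by (simp add: b_def)
    ultimately show ?thesis
      by linarith
  qed
  moreover have "0 < b"
    unfolding b_def using \<open>1 \<le> \<eta>\<close> \<open>0 < B\<close> by simp
  moreover have "0 \<le> v"
    unfolding v_def using \<open>0 \<le> m\<close> by simp
  ultimately obtain l where "0 < l" and l: "- (l * \<rho>) + v * bennett_psi b l \<le> - (\<rho>\<^sup>2 / ?D)"
    using bennett_exponent_le_bernstein \<open>0 < \<rho>\<close> by blast
  have "measure_pmf.prob (iid_paths \<mu> P H T) {X. ?Y X > \<rho>}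
      \<le> exp (- (l * \<rho>) + real (card {1..T}) * (real H * ((1 + \<eta> * (\<eta> - 1) / 2)\<^sup>2 * m) * bennett_psi b l))"
    unfolding iid_paths_def b_def
    using mgf_centred_path_sum_le[OF \<open>1 \<le> \<eta>\<close> reg bound \<open>0 < B\<close> var \<open>0 \<le> m\<close> \<open>0 < l\<close>]
    by (intro prob_sum_Pi_pmf_gt_le finite_set_pmf_markov_path \<open>0 < l\<close>) auto
  also have "\<dots> \<le> exp (- (\<rho>\<^sup>2 / ?D))"
    using l by (simp add: v_def mult.assoc)
  finally show ?thesis .
qed

lemma markov_chain_bernstein:
  fixes \<mu> :: "'z::finite pmf" and P :: "nat \<Rightarrow> 'z \<Rightarrow> 'z pmf"
  assumes "1 \<le> \<eta>" and reg: "\<And>h. 1 \<le> h \<Longrightarrow> column_regular \<eta> (P h)"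
    and bound: "\<And>h z. h \<in> {1..H} \<Longrightarrow> \<bar>\<phi> h z\<bar> \<le> B"
    and var: "\<And>l z. l \<in> {1..H} \<Longrightarrow> measure_pmf.variance (step_kernel \<mu> P (l - 1) z) (\<phi> l) \<le> m"
    and "0 \<le> \<rho>"
  shows "measure_pmf.prob (iid_paths \<mu> P H T)
           {X. (\<Sum>t=1..T. \<Sum>h=1..H. \<phi> h (X t h)
                 - measure_pmf.expectation (markov_path \<mu> P H) (\<lambda>x. \<phi> h (x h))) > \<rho>}
         \<le> exp (- (\<rho>\<^sup>2 / (2 * real T * real H * ((1 + sqrt 2 * \<eta> * (2 * \<eta> - 1))\<^sup>2 * m)
                          + 2 / 3 * ((2 * \<eta> - 1) * B) * \<rho>)))"
    (is "measure_pmf.prob _ {X. ?Y X > \<rho>} \<le> _")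
proof -
  consider "H = 0 \<or> B = 0" | "\<rho> = 0" | "0 < H" "0 < B" "0 < \<rho>"
    using bound[of 1 undefined] \<open>0 \<le> \<rho>\<close> by fastforce
  then show ?thesis
  proof cases
    case 1
    then have "\<phi> h z = 0" if "h \<in> {1..H}" for h z
      using bound[OF that, of z] that by auto
    then have "?Y X = 0" for X
      by (auto intro!: sum.neutral)
    then show ?thesis
      using \<open>0 \<le> \<rho>\<close> by simp
  next
    case 2
    then show ?thesis
      by simp
  next
    case 3
    have "measure_pmf.variance (step_kernel \<mu> P 0 undefined) (\<phi> 1) \<le> m"
      using var[of 1 undefined] \<open>0 < H\<close> by simp
    then have "0 \<le> m"
      using measure_pmf.variance_positive[of "step_kernel \<mu> P 0 undefined" "\<phi> 1"] by linarith
    with 3 show ?thesis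
      using assms by (intro markov_chain_bernstein_nondegenerate) auto
  qed
qed

theorem theorem9:
  fixes \<mu> :: "'z::finite pmf" and P :: "nat \<Rightarrow> 'z \<Rightarrow> 'z pmf"
    and \<phi> :: "nat \<Rightarrow> 'z \<Rightarrow> real" and \<eta> \<rho> :: real and H T :: nat
  assumes "\<eta> \<ge> 1"
    and "regular_dist \<eta> \<mu>"
    and "\<And>h. h \<ge> 1 \<Longrightarrow> regular_kernel \<eta> (P h)"
    and "\<And>h. h \<ge> 1 \<Longrightarrow> \<exists>\<nu>. stationary (P h) \<nu>"
    and "\<rho> \<ge> 0"
  shows "measure_pmf.prob (iid_paths \<mu> P H T)
           {X. (\<Sum>t=1..T. \<Sum>h=1..H. \<phi> h (X t h)
                 - measure_pmf.expectation (markov_path \<mu> P H) (\<lambda>x. \<phi> h (x h))) > \<rho>}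
         \<le> exp (- (\<rho>\<^sup>2 / (2 * real T * real H * V_const \<eta> \<mu> P \<phi> H
                          + 2 / 3 * M_const \<eta> \<phi> H * \<rho>)))"
proof -
  let ?bounds = "{\<bar>\<phi> h z\<bar> | h z. h \<in> {1..H}}"
  let ?variances = "{measure_pmf.variance (step_kernel \<mu> P (l - 1) z) (\<phi> h) | z l h. 1 \<le> l \<and> l \<le> h \<and> h \<le> H}"
  have "finite ?bounds"
    by (rule finite_subset[of _ "(\<lambda>(h, z). \<bar>\<phi> h z\<bar>) ` ({1..H} \<times> UNIV)"]) auto
  have "finite ?variances"
    by (rule finite_subset[of _ "(\<lambda>(z, l, h). measure_pmf.variance (step_kernel \<mu> P (l - 1) z) (\<phi> h))
        ` (UNIV \<times> {..H} \<times> {..H})"]) force+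
  have "column_regular \<eta> (P h)" if "1 \<le> h" for h
    using assms(3)[OF that] by (auto simp: regular_kernel_def column_regular_def)
  then show ?thesis
    unfolding V_const_def M_const_def
    using \<open>finite ?bounds\<close> \<open>finite ?variances\<close> assms(1,5)
    by (intro markov_chain_bernstein) (auto intro!: Max_ge)
qed

end
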